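(* A finite graph $G$ is isomorphic to $\mathrm{SG}^+(P,W)$ for some finite point sets $P,W$ in the plane such that no two distinct points of $P\cup W$ have equal $x$-coordinate or equal $y$-coordinate, if and only if $G$ is a permutation graph. Moreover, every such square graph is isomorphic to $\mathrm{SG}^+(P',W')$ for some such sets with $|W'|\le 1$.
   Context: For finite point sets $P$ (vertices) and $W$ (witnesses) in $\mathbb{R}^2$ (which may share points), the square graph $\mathrm{SG}^+(P,W)$ is the graph with vertex set $P$ in which distinct $x,y\in P$ are adjacent if and only if there is an axis-aligned square with $x$ and $y$ on its boundary whose interior contains at least one point of $W$. A point $a$ dominates $b$ if $x(a)\ge x(b)$ and $y(a)\ge y(b)$. A graph $G$ is a permutation graph if there exist a finite set $S\subset\mathbb{R}^2$ with pairwise distinct $x$-coordinates and pairwise distinct $y$-coordinates and a bijection $f:V(G)\to S$ such that distinct $u,v$ are adjacent iff one of $f(u),f(v)$ dominates the other (equivalently, $G$ is the comparability graph of a partial order of dimension at most $2$). *)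

theory Defs
  imports Main "HOL.Real"
begin

type_synonym point = "real \<times> real"

definition in_closed_sq :: "real \<Rightarrow> real \<Rightarrow> real \<Rightarrow> point \<Rightarrow> bool" where
  "in_closed_sq a b s p \<longleftrightarrow> a \<le> fst p \<and> fst p \<le> a + s \<and> b \<le> snd p \<and> snd p \<le> b + s"

definition in_open_sq :: "real \<Rightarrow> real \<Rightarrow> real \<Rightarrow> point \<Rightarrow> bool" where
  "in_open_sq a b s p \<longleftrightarrow> a < fst p \<and> fst p < a + s \<and> b < snd p \<and> snd p < b + s"

definition on_sq_boundary :: "real \<Rightarrow> real \<Rightarrow> real \<Rightarrow> point \<Rightarrow> bool" where
  "on_sq_boundary a b s p \<longleftrightarrow> in_closed_sq a b s p \<and> \<not> in_open_sq a b s p"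

definition sg_adj :: "point set \<Rightarrow> point \<Rightarrow> point \<Rightarrow> bool" where
  "sg_adj W x y \<longleftrightarrow> x \<noteq> y \<and>
     (\<exists>a b s. s > 0 \<and> on_sq_boundary a b s x \<and> on_sq_boundary a b s y \<and>
        (\<exists>w\<in>W. in_open_sq a b s w))"

definition dominates :: "point \<Rightarrow> point \<Rightarrow> bool" where
  "dominates a b \<longleftrightarrow> fst a \<ge> fst b \<and> snd a \<ge> snd b"

definition general_pos :: "point set \<Rightarrow> bool" where
  "general_pos S \<longleftrightarrow> (\<forall>p\<in>S. \<forall>q\<in>S. p \<noteq> q \<longrightarrow> fst p \<noteq> fst q \<and> snd p \<noteq> snd q)"

definition finite_simple_graph :: "'a set \<Rightarrow> ('a \<Rightarrow> 'a \<Rightarrow> bool) \<Rightarrow> bool" where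
  "finite_simple_graph V E \<longleftrightarrow> finite V \<and>
     (\<forall>u v. E u v \<longrightarrow> u \<in> V \<and> v \<in> V \<and> u \<noteq> v \<and> E v u)"

definition graph_iso :: "'a set \<Rightarrow> ('a \<Rightarrow> 'a \<Rightarrow> bool) \<Rightarrow> 'b set \<Rightarrow> ('b \<Rightarrow> 'b \<Rightarrow> bool) \<Rightarrow> bool" where
  "graph_iso V E V' E' \<longleftrightarrow>
     (\<exists>f. bij_betw f V V' \<and> (\<forall>u\<in>V. \<forall>v\<in>V. E u v \<longleftrightarrow> E' (f u) (f v)))"

definition permutation_graph :: "'a set \<Rightarrow> ('a \<Rightarrow> 'a \<Rightarrow> bool) \<Rightarrow> bool" where
  "permutation_graph V E \<longleftrightarrow>
     (\<exists>S :: point set. \<exists>f. finite S \<and> general_pos S \<and> bij_betw f V S \<and>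
        (\<forall>u\<in>V. \<forall>v\<in>V. u \<noteq> v \<longrightarrow> (E u v \<longleftrightarrow> dominates (f u) (f v) \<or> dominates (f v) (f u))))"

end

theory Submission
  imports Defs Complex_Main
begin

(* 1. A single witness w makes the distinct pair x, y adjacent unless w "blocks" the pair:
      w lies outside both coordinate slabs spanned by x and y, in one of the two corner
      regions on the diagonal of their bounding box (witnesses_iff_not_blocks).  In
      particular a witness far to the lower right realises exactly the dominance graph
      (far_witness_realises_dominance), which gives "permutation graph ==> square graph"
      with |W| <= 1.
   2. For the converse we describe SG+(P,W) combinatorially through the x- and y-ranks of
      points relative to W.  Points outside W live in cells of the rank grid; the only
      non-edges are (a) pairs inside one cell on a diagonal or anti-diagonal cut of the
      permutation of W, (b) a witness next to such a cut and the two cells it touches, and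
      (c) consecutive witnesses across a cut.
   3. An explicit dominance layout realises this description: cells become blocks placed
      along an increasing diagonal, witnesses at cuts become "bridge" points that are
      incomparable exactly to their two cells and to their chain neighbours
      (sg_permutation_graph). *)

section \<open>Geometry of a single witness\<close>

definition apart :: "point \<Rightarrow> point \<Rightarrow> bool" where
  "apart p q \<longleftrightarrow> fst p \<noteq> fst q \<and> snd p \<noteq> snd q"

definition agree :: "point \<Rightarrow> point \<Rightarrow> bool" where
  "agree p q \<longleftrightarrow> (fst p < fst q \<longleftrightarrow> snd p < snd q)"

lemma apart_sym: "apart p q \<longleftrightarrow> apart q p"
  unfolding apart_def by auto

lemma agree_sym: "apart p q \<Longrightarrow> agree p q \<longleftrightarrow> agree q p"
  unfolding apart_def agree_def by auto

lemma general_pos_apart: "general_pos S \<Longrightarrow> p \<in> S \<Longrightarrow> q \<in> S \<Longrightarrow> p \<noteq> q \<Longrightarrow> apart p q"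
  unfolding general_pos_def apart_def by blast

lemma dominates_iff_agree: "apart p q \<Longrightarrow> (dominates p q \<or> dominates q p) \<longleftrightarrow> agree p q"
  unfolding apart_def agree_def dominates_def by auto

definition witnesses :: "point \<Rightarrow> point \<Rightarrow> point \<Rightarrow> bool" where
  "witnesses x y w \<longleftrightarrow>
     (\<exists>a b s. s > 0 \<and> on_sq_boundary a b s x \<and> on_sq_boundary a b s y \<and> in_open_sq a b s w)"

lemma sg_adj_iff_witness: "sg_adj W x y \<longleftrightarrow> x \<noteq> y \<and> (\<exists>w\<in>W. witnesses x y w)"
  unfolding sg_adj_def witnesses_def by blast

lemma witnesses_sym: "witnesses x y w \<longleftrightarrow> witnesses y x w"
  unfolding witnesses_def by blast

lemma sg_adj_sym: "sg_adj W x y \<longleftrightarrow> sg_adj W y x"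
  unfolding sg_adj_iff_witness using witnesses_sym by blast

lemma sg_adj_irrefl: "\<not> sg_adj W x x"
  unfolding sg_adj_def by simp

text \<open>A boundary point is never in the interior, so an endpoint never witnesses its own pair.\<close>
lemma not_witnesses_endpoint: "\<not> witnesses x y x" "\<not> witnesses x y y"
  unfolding witnesses_def on_sq_boundary_def by auto

text \<open>w blocks the pair x, y if it lies outside both slabs spanned by x and y, in one of the
  two corners on the diagonal of their bounding box (lower left / upper right for an
  increasing pair, upper left / lower right for a decreasing one).\<close>
definition blocks :: "point \<Rightarrow> point \<Rightarrow> point \<Rightarrow> bool" where
  "blocks x y w \<longleftrightarrow> (fst w < fst x \<longleftrightarrow> fst w < fst y) \<and> (snd w < snd x \<longleftrightarrow> snd w < snd y)
     \<and> (agree x y \<longleftrightarrow> agree w x)"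

lemma blocks_sym: "apart x y \<Longrightarrow> blocks x y w \<longleftrightarrow> blocks y x w"
  unfolding blocks_def agree_def apart_def by auto

lemma open_square_between:
  assumes "in_closed_sq a c s q" "in_open_sq a c s w"
    and "(fst q < fst p \<and> fst p < fst w) \<or> (fst w < fst p \<and> fst p < fst q)"
    and "(snd q < snd p \<and> snd p < snd w) \<or> (snd w < snd p \<and> snd p < snd q)"
  shows "in_open_sq a c s p"
  using assms unfolding in_closed_sq_def in_open_sq_def by auto

text \<open>A blocking point cannot witness: one endpoint would lie strictly between the other
  endpoint and the blocking point, hence in the interior of the square.\<close>
lemma witnesses_imp_not_blocks:
  assumes "apart x y" "apart w x" "apart w y" and "witnesses x y w"
  shows "\<not> blocks x y w"
proof
  assume b: "blocks x y w"
  from assms(4) obtain a c s where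
    s: "on_sq_boundary a c s x" "on_sq_boundary a c s y" "in_open_sq a c s w"
    unfolding witnesses_def by blast
  have cx: "in_closed_sq a c s x" "\<not> in_open_sq a c s x"
    and cy: "in_closed_sq a c s y" "\<not> in_open_sq a c s y"
    using s unfolding on_sq_boundary_def by auto
  have "((fst x < fst y \<and> fst y < fst w) \<or> (fst w < fst y \<and> fst y < fst x)) \<and>
          ((snd x < snd y \<and> snd y < snd w) \<or> (snd w < snd y \<and> snd y < snd x))
     \<or> ((fst y < fst x \<and> fst x < fst w) \<or> (fst w < fst x \<and> fst x < fst y)) \<and>
          ((snd y < snd x \<and> snd x < snd w) \<or> (snd w < snd x \<and> snd x < snd y))"
    using b assms(1-3) unfolding blocks_def agree_def apart_def by argo
  then show False
    using open_square_between[OF cx(1) s(3), of y] open_square_between[OF cy(1) s(3), of x] cx(2) cy(2)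
    by blast
qed

lemma exists_large_side: "\<exists>s::real. s > 0 \<and> s > A \<and> s > B \<and> s > C \<and> s > D"
  by (rule exI[of _ "1 + \<bar>A\<bar> + \<bar>B\<bar> + \<bar>C\<bar> + \<bar>D\<bar>"]) auto

text \<open>How a large square witnesses a pair x = (x1,x2), y = (y1,y2) with x1 < y1 (two ways
  for an increasing, two for a decreasing pair): one endpoint on a vertical side, the other
  on a horizontal side, and w in the quadrant opened towards the fixed corner of the square.\<close>
lemma witness_square_increasing:
  assumes "x1 < y1" "x2 < y2"
  shows "w1 < y1 \<Longrightarrow> x2 < w2 \<Longrightarrow> witnesses (x1,x2) (y1,y2) (w1,w2)"
    and "x1 < w1 \<Longrightarrow> w2 < y2 \<Longrightarrow> witnesses (x1,x2) (y1,y2) (w1,w2)"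
proof -
  assume w: "w1 < y1" "x2 < w2"
  obtain s where s: "s > 0" "s > y1 - x1" "s > y2 - x2" "s > y1 - w1" "s > w2 - x2"
    using exists_large_side by blast
  show "witnesses (x1,x2) (y1,y2) (w1,w2)"
    unfolding witnesses_def on_sq_boundary_def in_closed_sq_def in_open_sq_def
    by (rule exI[of _ "y1 - s"], rule exI[of _ x2], rule exI[of _ s]) (use s assms w in auto)
next
  assume w: "x1 < w1" "w2 < y2"
  obtain s where s: "s > 0" "s > y1 - x1" "s > y2 - x2" "s > w1 - x1" "s > y2 - w2"
    using exists_large_side by blast
  show "witnesses (x1,x2) (y1,y2) (w1,w2)"
    unfolding witnesses_def on_sq_boundary_def in_closed_sq_def in_open_sq_def
    by (rule exI[of _ x1], rule exI[of _ "y2 - s"], rule exI[of _ s]) (use s assms w in auto)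
qed

lemma witness_square_decreasing:
  assumes "x1 < y1" "y2 < x2"
  shows "w1 < y1 \<Longrightarrow> w2 < x2 \<Longrightarrow> witnesses (x1,x2) (y1,y2) (w1,w2)"
    and "x1 < w1 \<Longrightarrow> y2 < w2 \<Longrightarrow> witnesses (x1,x2) (y1,y2) (w1,w2)"
proof -
  assume w: "w1 < y1" "w2 < x2"
  obtain s where s: "s > 0" "s > y1 - x1" "s > x2 - y2" "s > y1 - w1" "s > x2 - w2"
    using exists_large_side by blast
  show "witnesses (x1,x2) (y1,y2) (w1,w2)"
    unfolding witnesses_def on_sq_boundary_def in_closed_sq_def in_open_sq_def
    by (rule exI[of _ "y1 - s"], rule exI[of _ "x2 - s"], rule exI[of _ s]) (use s assms w in auto)
next
  assume w: "x1 < w1" "y2 < w2"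
  obtain s where s: "s > 0" "s > y1 - x1" "s > x2 - y2" "s > w1 - x1" "s > w2 - y2"
    using exists_large_side by blast
  show "witnesses (x1,x2) (y1,y2) (w1,w2)"
    unfolding witnesses_def on_sq_boundary_def in_closed_sq_def in_open_sq_def
    by (rule exI[of _ x1], rule exI[of _ y2], rule exI[of _ s]) (use s assms w in auto)
qed

text \<open>Conversely every non-blocking point falls into one of these four quadrants.\<close>
lemma not_blocks_imp_witnesses:
  assumes lt: "fst x < fst y" and "apart x y" "apart w x" "apart w y" and nb: "\<not> blocks x y w"
  shows "witnesses x y w"
proof -
  obtain x1 x2 y1 y2 w1 w2 where xyw: "x = (x1,x2)" "y = (y1,y2)" "w = (w1,w2)"
    by (cases x, cases y, cases w) auto
  have h: "x1 < y1" "x2 \<noteq> y2" "w1 \<noteq> x1" "w1 \<noteq> y1" "w2 \<noteq> x2" "w2 \<noteq> y2"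
    using assms(1-4) unfolding xyw apart_def by auto
  have nb': "\<not> ((w1 < x1 \<longleftrightarrow> w1 < y1) \<and> (w2 < x2 \<longleftrightarrow> w2 < y2) \<and>
      ((x1 < y1 \<longleftrightarrow> x2 < y2) \<longleftrightarrow> (w1 < x1 \<longleftrightarrow> w2 < x2)))"
    using nb unfolding xyw blocks_def agree_def fst_conv snd_conv .
  show ?thesis
  proof (cases "x2 < y2")
    case True
    have "(w1 < y1 \<and> x2 < w2) \<or> (x1 < w1 \<and> w2 < y2)"
      using nb' h True
      by (cases "w1 < x1"; cases "w2 < x2"; cases "w1 < y1"; cases "w2 < y2"; simp; linarith)
    then show ?thesis using witness_square_increasing[OF h(1) True] xyw by blast
  next
    case False
    then have dec: "y2 < x2" using h(2) by linarith
    have "(w1 < y1 \<and> w2 < x2) \<or> (x1 < w1 \<and> y2 < w2)"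
      using nb' h dec
      by (cases "w1 < x1"; cases "w2 < x2"; cases "w1 < y1"; cases "w2 < y2"; simp; linarith)
    then show ?thesis using witness_square_decreasing[OF h(1) dec] xyw by blast
  qed
qed

lemma witnesses_iff_not_blocks:
  assumes "apart x y" "apart w x" "apart w y"
  shows "witnesses x y w \<longleftrightarrow> \<not> blocks x y w"
proof (cases "fst x < fst y")
  case True
  then show ?thesis using witnesses_imp_not_blocks not_blocks_imp_witnesses assms by blast
next
  case False
  then have "fst y < fst x" using assms(1) unfolding apart_def by auto
  moreover have "apart y x" "apart w y" "apart w x" using assms apart_sym by auto
  ultimately show ?thesis
    using witnesses_imp_not_blocks not_blocks_imp_witnesses[of y x w] assms witnesses_sym
      blocks_sym by metis
qed

section \<open>One witness realises the dominance graph\<close>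

text \<open>A witness to the lower right of all points blocks exactly the decreasing pairs, so the
  square graph with that single witness is the dominance comparability graph.\<close>
lemma far_witness_realises_dominance:
  assumes "finite S" "general_pos S"
  shows "\<exists>w. general_pos (S \<union> {w}) \<and>
     (\<forall>u\<in>S. \<forall>v\<in>S. u \<noteq> v \<longrightarrow> (sg_adj {w} u v \<longleftrightarrow> dominates u v \<or> dominates v u))"
proof (cases "S = {}")
  case True
  then show ?thesis unfolding general_pos_def by auto
next
  case False
  define w where "w = (Max (fst ` S) + 1, Min (snd ` S) - 1)"
  have wx: "fst p < fst w" if "p \<in> S" for p
  proof -
    have "fst p \<le> Max (fst ` S)" using Max_ge[of "fst ` S" "fst p"] assms(1) that by auto
    then show ?thesis unfolding w_def by simp
  qed
  have wy: "snd w < snd p" if "p \<in> S" for p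
  proof -
    have "Min (snd ` S) \<le> snd p" using Min_le[of "snd ` S" "snd p"] assms(1) that by auto
    then show ?thesis unfolding w_def by simp
  qed
  have gp: "general_pos (S \<union> {w})"
    using assms(2) wx wy unfolding general_pos_def by fastforce
  have "sg_adj {w} u v \<longleftrightarrow> dominates u v \<or> dominates v u" if uv: "u \<in> S" "v \<in> S" "u \<noteq> v" for u v
  proof -
    have "w \<notin> S" using wx by blast
    then have ap: "apart u v" "apart w u" "apart w v"
      using general_pos_apart[OF gp] uv by (metis Un_iff singletonI)+
    have "sg_adj {w} u v \<longleftrightarrow> \<not> blocks u v w"
      unfolding sg_adj_iff_witness using uv(3) witnesses_iff_not_blocks[OF ap] by simp
    also have "\<dots> \<longleftrightarrow> agree u v"
      unfolding blocks_def agree_def using wx[OF uv(1)] wx[OF uv(2)] wy[OF uv(1)] wy[OF uv(2)] by auto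
    finally show ?thesis using dominates_iff_agree[OF ap(1)] by simp
  qed
  then show ?thesis using gp by blast
qed

section \<open>Ranks relative to the witness set\<close>

text \<open>The rank of p among W with respect to a coordinate f: the number of elements of W
  strictly below p.  Ranks replace real coordinates by the combinatorial grid of W.\<close>
definition rank :: "('a \<Rightarrow> 'b::linorder) \<Rightarrow> 'a set \<Rightarrow> 'a \<Rightarrow> nat" where
  "rank f W p = card {w\<in>W. f w < f p}"

abbreviation xrank :: "point set \<Rightarrow> point \<Rightarrow> nat" where "xrank \<equiv> rank fst"
abbreviation yrank :: "point set \<Rightarrow> point \<Rightarrow> nat" where "yrank \<equiv> rank snd"

lemma rank_less_iff:
  assumes "finite W" "w \<in> W"
  shows "f w < f p \<longleftrightarrow> rank f W w < rank f W p"
proof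
  assume "f w < f p"
  then have "{v\<in>W. f v < f w} \<subset> {v\<in>W. f v < f p}"
    using assms(2) by (auto intro: less_trans)
  then show "rank f W w < rank f W p"
    unfolding rank_def using assms(1) by (simp add: psubset_card_mono)
next
  assume lt: "rank f W w < rank f W p"
  show "f w < f p"
  proof (rule ccontr)
    assume "\<not> f w < f p"
    then have "{v\<in>W. f v < f p} \<subseteq> {v\<in>W. f v < f w}" by auto
    then have "rank f W p \<le> rank f W w"
      unfolding rank_def using assms(1) by (simp add: card_mono)
    then show False using lt by simp
  qed
qed

lemma rank_le_card: "finite W \<Longrightarrow> rank f W p \<le> card W"
  unfolding rank_def by (rule card_mono) auto

lemma rank_less_card:
  assumes "finite W" "w \<in> W"
  shows "rank f W w < card W"
proof -
  have "{v\<in>W. f v < f w} \<subset> W" using assms(2) by auto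
  then show ?thesis unfolding rank_def using assms(1) by (simp add: psubset_card_mono)
qed

lemma rank_inj_on:
  assumes "finite W" "inj_on f W"
  shows "inj_on (rank f W) W"
proof (rule inj_onI)
  fix w v assume wv: "w \<in> W" "v \<in> W" "rank f W w = rank f W v"
  show "w = v"
  proof (rule ccontr)
    assume "w \<noteq> v"
    then have "f w < f v \<or> f v < f w"
      using assms(2) wv(1,2) inj_on_eq_iff by fastforce
    then show False
      using rank_less_iff[OF assms(1) wv(1), of f v] rank_less_iff[OF assms(1) wv(2), of f w] wv(3)
      by auto
  qed
qed

lemma rank_exists:
  assumes "finite W" "inj_on f W" "k < card W"
  shows "\<exists>w\<in>W. rank f W w = k"
proof -
  have sub: "rank f W ` W \<subseteq> {..<card W}" using rank_less_card[OF assms(1)] by auto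
  have "card (rank f W ` W) = card {..<card W}"
    using card_image[OF rank_inj_on[OF assms(1,2)]] by simp
  then have "rank f W ` W = {..<card W}" using card_subset_eq[OF _ sub] by simp
  then show ?thesis using assms(3) by (metis imageE lessThan_iff)
qed

lemma rank_neighbour:
  assumes W: "finite W" "inj_on f W" and s: "s \<in> W" and m: "m \<le> card W"
    and sep: "\<forall>w\<in>W. w \<noteq> s \<longrightarrow> (rank f W w < rank f W s \<longleftrightarrow> rank f W w < m)"
  shows "rank f W s \<le> m \<and> m \<le> Suc (rank f W s)"
proof
  let ?k = "rank f W s"
  have k: "?k < card W" using rank_less_card[OF W(1) s] .
  show "?k \<le> m"
  proof (rule ccontr)
    assume "\<not> ?k \<le> m"
    then obtain w where w: "w \<in> W" "rank f W w = m" using rank_exists[OF W, of m] k by auto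
    then have "w \<noteq> s" using \<open>\<not> ?k \<le> m\<close> by auto
    then show False using sep w \<open>\<not> ?k \<le> m\<close> by auto
  qed
  show "m \<le> Suc ?k"
  proof (rule ccontr)
    assume "\<not> m \<le> Suc ?k"
    then obtain w where w: "w \<in> W" "rank f W w = Suc ?k" using rank_exists[OF W, of "Suc ?k"] m by auto
    then have "w \<noteq> s" by auto
    then show False using sep w \<open>\<not> m \<le> Suc ?k\<close> by auto
  qed
qed

text \<open>Blocking expressed through ranks; it agrees with the geometric notion for w \<in> W.\<close>
definition rank_blocks :: "point set \<Rightarrow> point \<Rightarrow> point \<Rightarrow> point \<Rightarrow> bool" where
  "rank_blocks W x y w \<longleftrightarrow>
     (xrank W w < xrank W x \<longleftrightarrow> xrank W w < xrank W y) \<and>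
     (yrank W w < yrank W x \<longleftrightarrow> yrank W w < yrank W y) \<and>
     (agree x y \<longleftrightarrow> (xrank W w < xrank W x \<longleftrightarrow> yrank W w < yrank W x))"

lemma sg_adj_iff_rank:
  assumes W: "finite W" and gp: "general_pos (P \<union> W)" and xy: "x \<in> P" "y \<in> P" "x \<noteq> y"
  shows "sg_adj W x y \<longleftrightarrow> (\<exists>w\<in>W. w \<noteq> x \<and> w \<noteq> y \<and> \<not> rank_blocks W x y w)"
proof -
  have "witnesses x y w \<longleftrightarrow> w \<noteq> x \<and> w \<noteq> y \<and> \<not> rank_blocks W x y w" if w: "w \<in> W" for w
  proof (cases "w = x \<or> w = y")
    case True
    then show ?thesis using not_witnesses_endpoint by blast
  next
    case False
    have ap: "apart x y" "apart w x" "apart w y"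
      using general_pos_apart[OF gp] xy w False by auto
    have "blocks x y w \<longleftrightarrow> rank_blocks W x y w"
      unfolding blocks_def rank_blocks_def agree_def
      using rank_less_iff[OF W w, of fst] rank_less_iff[OF W w, of snd] by simp
    then show ?thesis using witnesses_iff_not_blocks[OF ap] False by simp
  qed
  then show ?thesis using sg_adj_iff_witness[of W x y] xy(3) by auto
qed

section \<open>Cuts of the witness permutation\<close>

definition diag_cut :: "point set \<Rightarrow> nat \<Rightarrow> nat \<Rightarrow> bool" where
  "diag_cut W i j \<longleftrightarrow> (\<forall>w\<in>W. xrank W w < i \<longleftrightarrow> yrank W w < j)"

definition anti_cut :: "point set \<Rightarrow> nat \<Rightarrow> nat \<Rightarrow> bool" where
  "anti_cut W i j \<longleftrightarrow> (\<forall>w\<in>W. xrank W w < i \<longleftrightarrow> \<not> yrank W w < j)"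

lemma diag_anti_cut_exclusive: "W \<noteq> {} \<Longrightarrow> diag_cut W i j \<Longrightarrow> anti_cut W i j \<Longrightarrow> False"
  unfolding diag_cut_def anti_cut_def by blast

text \<open>These are exactly the
  non-adjacent pairs of witnesses.\<close>
definition consecutive :: "point set \<Rightarrow> point \<Rightarrow> point \<Rightarrow> bool" where
  "consecutive W s t \<longleftrightarrow>
     (xrank W t = Suc (xrank W s) \<and> yrank W t = Suc (yrank W s) \<and> diag_cut W (xrank W s) (yrank W s))
   \<or> (xrank W t = Suc (xrank W s) \<and> yrank W s = Suc (yrank W t) \<and>
      anti_cut W (xrank W s) (Suc (yrank W s)))"

locale sg_setting =
  fixes P W :: "point set"
  assumes finite_W: "finite W" and general_pos_PW: "general_pos (P \<union> W)"
begin

lemma apart_PW: "p \<in> P \<union> W \<Longrightarrow> q \<in> P \<union> W \<Longrightarrow> p \<noteq> q \<Longrightarrow> apart p q"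
  using general_pos_apart[OF general_pos_PW] by blast

lemma inj_fst: "inj_on fst W" and inj_snd: "inj_on snd W"
  using apart_PW unfolding inj_on_def apart_def by blast+

lemma rank_distinct:
  "w \<in> W \<Longrightarrow> s \<in> W \<Longrightarrow> w \<noteq> s \<Longrightarrow> xrank W w \<noteq> xrank W s \<and> yrank W w \<noteq> yrank W s"
  using rank_inj_on[OF finite_W inj_fst] rank_inj_on[OF finite_W inj_snd] inj_on_eq_iff by metis

lemma agree_rank: "s \<in> W \<Longrightarrow> agree s v \<longleftrightarrow> (xrank W s < xrank W v \<longleftrightarrow> yrank W s < yrank W v)"
  unfolding agree_def using rank_less_iff[OF finite_W] by blast

lemma rank_blocks_witness:
  "s \<in> W \<Longrightarrow> rank_blocks W s v w \<longleftrightarrow>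
     (xrank W w < xrank W s \<longleftrightarrow> xrank W w < xrank W v) \<and>
     (yrank W w < yrank W s \<longleftrightarrow> yrank W w < yrank W v) \<and>
     ((xrank W s < xrank W v \<longleftrightarrow> yrank W s < yrank W v) \<longleftrightarrow>
      (xrank W w < xrank W s \<longleftrightarrow> yrank W w < yrank W s))"
  unfolding rank_blocks_def using agree_rank by simp

lemma diag_cut_step:
  "s \<in> W \<Longrightarrow> diag_cut W (xrank W s) (yrank W s) \<longleftrightarrow> diag_cut W (Suc (xrank W s)) (Suc (yrank W s))"
  unfolding diag_cut_def using rank_distinct by (metis less_Suc_eq lessI less_irrefl)

lemma anti_cut_step:
  "s \<in> W \<Longrightarrow> anti_cut W (xrank W s) (Suc (yrank W s)) \<longleftrightarrow> anti_cut W (Suc (xrank W s)) (yrank W s)"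
  unfolding anti_cut_def using rank_distinct by (metis less_Suc_eq lessI less_irrefl)

lemma diag_anti_at_witness:
  assumes s: "s \<in> W" "W \<noteq> {s}"
    and "diag_cut W (xrank W s) (yrank W s)" "anti_cut W (xrank W s) (Suc (yrank W s))"
  shows False
proof -
  obtain w where w: "w \<in> W" "w \<noteq> s" using s by blast
  have "yrank W w \<noteq> yrank W s" using rank_distinct[OF w(1) s(1) w(2)] by simp
  then show False using assms(3,4) w(1) unfolding diag_cut_def anti_cut_def using less_Suc_eq by blast
qed

lemma adj_different_cells:
  assumes u: "u \<in> P" "u \<notin> W" and v: "v \<in> P" "v \<notin> W" and uv: "u \<noteq> v"
    and cells: "xrank W u \<noteq> xrank W v \<or> yrank W u \<noteq> yrank W v"
  shows "sg_adj W u v"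
proof -
  have "\<exists>w\<in>W. \<not> rank_blocks W u v w"
  proof (cases "xrank W u = xrank W v")
    case False
    have "min (xrank W u) (xrank W v) < max (xrank W u) (xrank W v)"
      using False by (auto simp: min_def max_def)
    moreover have "max (xrank W u) (xrank W v) \<le> card W"
      using rank_le_card[OF finite_W, of fst u] rank_le_card[OF finite_W, of fst v] by simp
    ultimately have "min (xrank W u) (xrank W v) < card W" by linarith
    then obtain w where w: "w \<in> W" "xrank W w = min (xrank W u) (xrank W v)"
      using rank_exists[OF finite_W inj_fst] by blast
    then have "\<not> rank_blocks W u v w" unfolding rank_blocks_def using False by (auto simp: min_def)
    then show ?thesis using w by blast
  next
    case True
    then have ne: "yrank W u \<noteq> yrank W v" using cells by blast
    have "min (yrank W u) (yrank W v) < max (yrank W u) (yrank W v)"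
      using ne by (auto simp: min_def max_def)
    moreover have "max (yrank W u) (yrank W v) \<le> card W"
      using rank_le_card[OF finite_W, of snd u] rank_le_card[OF finite_W, of snd v] by simp
    ultimately have "min (yrank W u) (yrank W v) < card W" by linarith
    then obtain w where w: "w \<in> W" "yrank W w = min (yrank W u) (yrank W v)"
      using rank_exists[OF finite_W inj_snd] by blast
    then have "\<not> rank_blocks W u v w" unfolding rank_blocks_def using ne by (auto simp: min_def)
    then show ?thesis using w by blast
  qed
  then obtain w where "w \<in> W" "\<not> rank_blocks W u v w" by blast
  moreover have "w \<noteq> u" "w \<noteq> v" using \<open>w \<in> W\<close> u(2) v(2) by auto
  ultimately show ?thesis using sg_adj_iff_rank[OF finite_W general_pos_PW u(1) v(1) uv] by blast
qed

lemma adj_same_cell: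
  assumes u: "u \<in> P" "u \<notin> W" and v: "v \<in> P" "v \<notin> W" and uv: "u \<noteq> v"
    and cell: "xrank W u = i" "yrank W u = j" "xrank W v = i" "yrank W v = j"
  shows "sg_adj W u v \<longleftrightarrow> (\<exists>w\<in>W. \<not> (agree u v \<longleftrightarrow> (xrank W w < i \<longleftrightarrow> yrank W w < j)))"
proof -
  have "rank_blocks W u v w \<longleftrightarrow> (agree u v \<longleftrightarrow> (xrank W w < i \<longleftrightarrow> yrank W w < j))" for w
    unfolding rank_blocks_def using cell by simp
  then show ?thesis
    using sg_adj_iff_rank[OF finite_W general_pos_PW u(1) v(1) uv] u(2) v(2) by auto
qed

lemma nonadj_witness_point:
  assumes s: "s \<in> W" and v: "v \<notin> W"
    and ij: "i = xrank W s" "j = yrank W s" "iv = xrank W v" "jv = yrank W v"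
    and nb: "\<forall>w\<in>W. w \<noteq> s \<longrightarrow> rank_blocks W s v w"
  shows "(diag_cut W i j \<and> ((iv = i \<and> jv = j) \<or> (iv = Suc i \<and> jv = Suc j))) \<or>
         (anti_cut W i (Suc j) \<and> ((iv = i \<and> jv = Suc j) \<or> (iv = Suc i \<and> jv = j)))"
proof -
  have B: "(xrank W w < i \<longleftrightarrow> xrank W w < iv) \<and> (yrank W w < j \<longleftrightarrow> yrank W w < jv)
     \<and> ((i < iv \<longleftrightarrow> j < jv) \<longleftrightarrow> (xrank W w < i \<longleftrightarrow> yrank W w < j))" if "w \<in> W" "w \<noteq> s" for w
    using nb that rank_blocks_witness[OF s] ij by simp
  have "\<forall>w\<in>W. w \<noteq> s \<longrightarrow> (xrank W w < xrank W s \<longleftrightarrow> xrank W w < iv)"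
    "\<forall>w\<in>W. w \<noteq> s \<longrightarrow> (yrank W w < yrank W s \<longleftrightarrow> yrank W w < jv)"
    using B ij by auto
  then have near: "i \<le> iv \<and> iv \<le> Suc i" "j \<le> jv \<and> jv \<le> Suc j"
    using rank_neighbour[OF finite_W inj_fst s rank_le_card[OF finite_W, of fst v]]
      rank_neighbour[OF finite_W inj_snd s rank_le_card[OF finite_W, of snd v]] ij by auto
  have ne: "xrank W w \<noteq> i \<and> yrank W w \<noteq> j" if "w \<in> W" "w \<noteq> s" for w
    using rank_distinct s ij that by blast
  show ?thesis
  proof (cases "i < iv \<longleftrightarrow> j < jv")
    case True
    have "diag_cut W i j" unfolding diag_cut_def
    proof
      fix w assume "w \<in> W"
      then show "xrank W w < i \<longleftrightarrow> yrank W w < j"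
        using B True ij by (cases "w = s") auto
    qed
    then show ?thesis using True near by auto
  next
    case False
    have "anti_cut W i (Suc j)" unfolding anti_cut_def
    proof
      fix w assume "w \<in> W"
      then show "xrank W w < i \<longleftrightarrow> \<not> yrank W w < Suc j"
        using B False ne ij by (cases "w = s") (auto simp: less_Suc_eq)
    qed
    then show ?thesis using False near by auto
  qed
qed

lemma blocks_near_cut:
  assumes s: "s \<in> W"
    and ij: "i = xrank W s" "j = yrank W s" "iv = xrank W v" "jv = yrank W v"
    and c: "(diag_cut W i j \<and> ((iv = i \<and> jv = j) \<or> (iv = Suc i \<and> jv = Suc j))) \<or>
         (anti_cut W i (Suc j) \<and> ((iv = i \<and> jv = Suc j) \<or> (iv = Suc i \<and> jv = j)))"
    and w: "w \<in> W" "w \<noteq> s"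
  shows "rank_blocks W s v w"
proof -
  have ne: "xrank W w \<noteq> i" "yrank W w \<noteq> j" using rank_distinct[OF w(1) s w(2)] ij by auto
  from c show ?thesis
  proof
    assume d: "diag_cut W i j \<and> ((iv = i \<and> jv = j) \<or> (iv = Suc i \<and> jv = Suc j))"
    then have "xrank W w < i \<longleftrightarrow> yrank W w < j" using w(1) unfolding diag_cut_def by blast
    then show ?thesis unfolding rank_blocks_witness[OF s] using d ne ij by (auto simp: less_Suc_eq)
  next
    assume d: "anti_cut W i (Suc j) \<and> ((iv = i \<and> jv = Suc j) \<or> (iv = Suc i \<and> jv = j))"
    then have "xrank W w < i \<longleftrightarrow> \<not> yrank W w < Suc j" using w(1) unfolding anti_cut_def by blast
    then show ?thesis unfolding rank_blocks_witness[OF s] using d ne ij by (auto simp: less_Suc_eq)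
  qed
qed

lemma adj_witness_point:
  assumes s: "s \<in> W" "s \<in> P" and v: "v \<in> P" "v \<notin> W"
    and ij: "i = xrank W s" "j = yrank W s" "iv = xrank W v" "jv = yrank W v"
  shows "sg_adj W s v \<longleftrightarrow> \<not> ((diag_cut W i j \<and> ((iv = i \<and> jv = j) \<or> (iv = Suc i \<and> jv = Suc j))) \<or>
         (anti_cut W i (Suc j) \<and> ((iv = i \<and> jv = Suc j) \<or> (iv = Suc i \<and> jv = j))))"
proof -
  have "s \<noteq> v" using s v by auto
  then have "sg_adj W s v \<longleftrightarrow> \<not> (\<forall>w\<in>W. w \<noteq> s \<longrightarrow> rank_blocks W s v w)"
    using sg_adj_iff_rank[OF finite_W general_pos_PW s(2) v(1)] v(2) by blast
  then show ?thesis
    using nonadj_witness_point[OF s(1) v(2) ij] blocks_near_cut[OF s(1) ij] by blast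
qed

lemma unseparated_witnesses_neighbours:
  assumes s: "s \<in> W" and t: "t \<in> W" and st: "s \<noteq> t" and lt: "xrank W s < xrank W t"
    and nb: "\<forall>w\<in>W. w \<noteq> s \<and> w \<noteq> t \<longrightarrow> rank_blocks W s t w"
  shows "xrank W t = Suc (xrank W s) \<and> (yrank W t = Suc (yrank W s) \<or> yrank W s = Suc (yrank W t))"
proof -
  define i j k l where "i = xrank W s" "j = yrank W s" "k = xrank W t" "l = yrank W t"
  note ijkl = this
  have B: "(xrank W w < i \<longleftrightarrow> xrank W w < k) \<and> (yrank W w < j \<longleftrightarrow> yrank W w < l)"
    if "w \<in> W" "w \<noteq> s" "w \<noteq> t" for w
    using nb that rank_blocks_witness[OF s] ijkl by simp
  have ik: "i < k" using lt ijkl by simp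
  have "\<forall>w\<in>W. w \<noteq> s \<longrightarrow> (xrank W w < i \<longleftrightarrow> xrank W w < k)"
  proof (intro ballI impI)
    fix w assume "w \<in> W" "w \<noteq> s"
    then show "xrank W w < i \<longleftrightarrow> xrank W w < k" using B ik ijkl by (cases "w = t") auto
  qed
  then have "i \<le> k \<and> k \<le> Suc i"
    using rank_neighbour[OF finite_W inj_fst s rank_le_card[OF finite_W, of fst t]] ijkl by simp
  then have k: "k = Suc i" using ik by simp
  have "j \<noteq> l" using rank_distinct[OF s t st] ijkl by simp
  then consider (up) "j < l" | (down) "l < j" by linarith
  then have "l = Suc j \<or> j = Suc l"
  proof cases
    case up
    have "\<forall>w\<in>W. w \<noteq> s \<longrightarrow> (yrank W w < j \<longleftrightarrow> yrank W w < l)"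
    proof (intro ballI impI)
      fix w assume "w \<in> W" "w \<noteq> s"
      then show "yrank W w < j \<longleftrightarrow> yrank W w < l" using B up ijkl by (cases "w = t") auto
    qed
    then have "j \<le> l \<and> l \<le> Suc j"
      using rank_neighbour[OF finite_W inj_snd s rank_le_card[OF finite_W, of snd t]] ijkl by simp
    then show ?thesis using up by simp
  next
    case down
    have "\<forall>w\<in>W. w \<noteq> t \<longrightarrow> (yrank W w < l \<longleftrightarrow> yrank W w < j)"
    proof (intro ballI impI)
      fix w assume "w \<in> W" "w \<noteq> t"
      then show "yrank W w < l \<longleftrightarrow> yrank W w < j" using B down ijkl by (cases "w = s") auto
    qed
    then have "l \<le> j \<and> j \<le> Suc l"
      using rank_neighbour[OF finite_W inj_snd t rank_le_card[OF finite_W, of snd s]] ijkl by simp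
    then show ?thesis using down by simp
  qed
  then show ?thesis using k ijkl by simp
qed

text \<open>Non-adjacent witnesses are consecutive: the blocking condition for the remaining
  witnesses is exactly the cut condition.\<close>
lemma nonadj_consecutive:
  assumes s: "s \<in> W" and t: "t \<in> W" and st: "s \<noteq> t" and lt: "xrank W s < xrank W t"
    and nb: "\<forall>w\<in>W. w \<noteq> s \<and> w \<noteq> t \<longrightarrow> rank_blocks W s t w"
  shows "consecutive W s t"
proof -
  define i j k l where "i = xrank W s" "j = yrank W s" "k = xrank W t" "l = yrank W t"
  note ijkl = this
  have B: "(i < k \<longleftrightarrow> j < l) \<longleftrightarrow> (xrank W w < i \<longleftrightarrow> yrank W w < j)"
    if "w \<in> W" "w \<noteq> s" "w \<noteq> t" for w
    using nb that rank_blocks_witness[OF s] ijkl by simp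
  have ne: "xrank W w \<noteq> i \<and> yrank W w \<noteq> j" if "w \<in> W" "w \<noteq> s" for w
    using rank_distinct s ijkl that by blast
  have k: "k = Suc i" and l: "l = Suc j \<or> j = Suc l"
    using unseparated_witnesses_neighbours[OF s t st lt nb] ijkl by auto
  from l show ?thesis
  proof
    assume l: "l = Suc j"
    have "diag_cut W i j" unfolding diag_cut_def
    proof
      fix w assume "w \<in> W"
      then show "xrank W w < i \<longleftrightarrow> yrank W w < j"
        using B[of w] ijkl k l by (cases "w = s \<or> w = t") auto
    qed
    then show ?thesis unfolding consecutive_def using ijkl k l by simp
  next
    assume l: "j = Suc l"
    have "anti_cut W i (Suc j)" unfolding anti_cut_def
    proof
      fix w assume "w \<in> W"
      then show "xrank W w < i \<longleftrightarrow> \<not> yrank W w < Suc j"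
        using B[of w] ne[of w] ijkl k l by (cases "w = s \<or> w = t") (auto simp: less_Suc_eq)
    qed
    then show ?thesis unfolding consecutive_def using ijkl k l by simp
  qed
qed

lemma consecutive_blocks:
  assumes s: "s \<in> W" and t: "t \<in> W" and c: "consecutive W s t" and w: "w \<in> W" "w \<noteq> s" "w \<noteq> t"
  shows "rank_blocks W s t w"
proof -
  have ne: "xrank W w \<noteq> xrank W s" "yrank W w \<noteq> yrank W s" "xrank W w \<noteq> xrank W t" "yrank W w \<noteq> yrank W t"
    using rank_distinct[OF w(1) s w(2)] rank_distinct[OF w(1) t w(3)] by auto
  from c show ?thesis unfolding consecutive_def
  proof
    assume d: "xrank W t = Suc (xrank W s) \<and> yrank W t = Suc (yrank W s) \<and>
      diag_cut W (xrank W s) (yrank W s)"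
    then have "xrank W w < xrank W s \<longleftrightarrow> yrank W w < yrank W s" using w(1) unfolding diag_cut_def by blast
    then show ?thesis unfolding rank_blocks_witness[OF s] using d ne by (auto simp: less_Suc_eq)
  next
    assume d: "xrank W t = Suc (xrank W s) \<and> yrank W s = Suc (yrank W t) \<and>
      anti_cut W (xrank W s) (Suc (yrank W s))"
    then have "xrank W w < xrank W s \<longleftrightarrow> \<not> yrank W w < Suc (yrank W s)"
      using w(1) unfolding anti_cut_def by blast
    then show ?thesis unfolding rank_blocks_witness[OF s] using d ne by (auto simp: less_Suc_eq)
  qed
qed

lemma adj_witnesses_ordered:
  assumes s: "s \<in> W" "s \<in> P" and t: "t \<in> W" "t \<in> P" and st: "s \<noteq> t"
    and lt: "xrank W s < xrank W t"
  shows "sg_adj W s t \<longleftrightarrow> \<not> consecutive W s t"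
  unfolding sg_adj_iff_rank[OF finite_W general_pos_PW s(2) t(2) st]
  using nonadj_consecutive[OF s(1) t(1) st lt] consecutive_blocks[OF s(1) t(1)] by blast

lemma adj_witnesses:
  assumes s: "s \<in> W" "s \<in> P" and t: "t \<in> W" "t \<in> P" and st: "s \<noteq> t"
  shows "sg_adj W s t \<longleftrightarrow> \<not> (consecutive W s t \<or> consecutive W t s)"
proof -
  have "xrank W s \<noteq> xrank W t" using rank_distinct[OF s(1) t(1) st] by simp
  then consider "xrank W s < xrank W t" | "xrank W t < xrank W s" by linarith
  then show ?thesis
  proof cases
    case 1
    then have "\<not> consecutive W t s" unfolding consecutive_def by auto
    then show ?thesis using adj_witnesses_ordered[OF s t st 1] by blast
  next
    case 2
    then have "\<not> consecutive W s t" unfolding consecutive_def by auto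
    then show ?thesis using adj_witnesses_ordered[OF t s _ 2] st sg_adj_sym by blast
  qed
qed

end

section \<open>The target layout\<close>

text \<open>Inside block c a
  point with local coordinates (a,b) is put at (8c + arctan a, 8c + arctan b): arctan keeps
  the order of local coordinates and keeps the point within distance 2 of the block corner.\<close>
definition block_point :: "int \<Rightarrow> real \<Rightarrow> real \<Rightarrow> point" where
  "block_point c a b = (8 * of_int c + arctan a, 8 * of_int c + arctan b)"

text \<open>The bridge point with index b lies to the upper left (e) or to the lower right (\<not> e)
  of blocks b and b+1, so that it is incomparable exactly with these two blocks.\<close>
definition bridge_point :: "bool \<Rightarrow> int \<Rightarrow> point" where
  "bridge_point e b =
     (if e then (8 * of_int b - 3, 8 * of_int b + 11) else (8 * of_int b + 11, 8 * of_int b - 3))"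

lemma abs_arctan_less_2: "\<bar>arctan x\<bar> < 2"
  using arctan_bounded[of x] pi_less_4 by linarith

lemma block_point_simps:
  "fst (block_point c a b) = 8 * of_int c + arctan a" "snd (block_point c a b) = 8 * of_int c + arctan b"
  unfolding block_point_def by auto

lemma bridge_point_simps:
  "fst (bridge_point e b) = (if e then 8 * of_int b - 3 else 8 * of_int b + 11)"
  "snd (bridge_point e b) = (if e then 8 * of_int b + 11 else 8 * of_int b - 3)"
  unfolding bridge_point_def by auto

lemma block_points_different_blocks:
  assumes "c \<noteq> c'"
  shows "apart (block_point c a b) (block_point c' a' b') \<and> agree (block_point c a b) (block_point c' a' b')"
proof -
  have A: "\<bar>arctan a\<bar> < 2" "\<bar>arctan b\<bar> < 2" "\<bar>arctan a'\<bar> < 2" "\<bar>arctan b'\<bar> < 2"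
    using abs_arctan_less_2 by auto
  have "c + 1 \<le> c' \<or> c' + 1 \<le> c" using assms by linarith
  then have "(of_int c + 1 \<le> (of_int c' :: real)) \<or> (of_int c' + 1 \<le> (of_int c :: real))"
    by (metis of_int_add of_int_le_iff of_int_1)
  then show ?thesis unfolding block_point_def apart_def agree_def using A by auto
qed

lemma block_points_same_block:
  "agree (block_point c a b) (block_point c a' b') \<longleftrightarrow> (a < a' \<longleftrightarrow> b < b')"
  "apart (block_point c a b) (block_point c a' b') \<longleftrightarrow> a \<noteq> a' \<and> b \<noteq> b'"
  unfolding block_point_def apart_def agree_def by (auto simp: arctan_less_iff arctan_eq_iff)

lemma block_bridge:
  "apart (block_point c a b) (bridge_point e b0) \<and>
   (agree (block_point c a b) (bridge_point e b0) \<longleftrightarrow> \<not> (c = b0 \<or> c = b0 + 1))"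
proof -
  let ?p = "block_point c a b" and ?q = "bridge_point e b0"
  have A: "\<bar>arctan a\<bar> < 2" "\<bar>arctan b\<bar> < 2" using abs_arctan_less_2 by auto
  consider "c \<le> b0 - 1" | "c = b0" | "c = b0 + 1" | "c \<ge> b0 + 2" by linarith
  then show ?thesis
  proof cases
    case 1
    then have "(of_int c :: real) \<le> of_int b0 - 1" by (metis of_int_diff of_int_le_iff of_int_1)
    then have "fst ?p < fst ?q" "snd ?p < snd ?q"
      unfolding block_point_simps bridge_point_simps using A by auto
    then show ?thesis using 1 unfolding apart_def agree_def by auto
  next
    case 2
    then have "fst ?p < fst ?q \<longleftrightarrow> \<not> e" "snd ?p < snd ?q \<longleftrightarrow> e" "fst ?p \<noteq> fst ?q" "snd ?p \<noteq> snd ?q"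
      unfolding block_point_simps bridge_point_simps using A by auto
    then show ?thesis using 2 unfolding apart_def agree_def by auto
  next
    case 3
    then have "(of_int c :: real) = of_int b0 + 1" by simp
    then have "fst ?p < fst ?q \<longleftrightarrow> \<not> e" "snd ?p < snd ?q \<longleftrightarrow> e" "fst ?p \<noteq> fst ?q" "snd ?p \<noteq> snd ?q"
      unfolding block_point_simps bridge_point_simps using A by auto
    then show ?thesis using 3 unfolding apart_def agree_def by auto
  next
    case 4
    then have "(of_int c :: real) \<ge> of_int b0 + 2" by (metis of_int_add of_int_le_iff of_int_numeral)
    then have "fst ?q < fst ?p" "snd ?q < snd ?p"
      unfolding block_point_simps bridge_point_simps using A by auto
    then show ?thesis using 4 unfolding apart_def agree_def by auto
  qed
qed

lemma bridges:
  assumes "(e, b) \<noteq> (e', b')"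
  shows "apart (bridge_point e b) (bridge_point e' b') \<and>
    (agree (bridge_point e b) (bridge_point e' b') \<longleftrightarrow> e = e' \<or> b' \<ge> b + 2 \<or> b \<ge> b' + 2)"
proof -
  have int: "fst (bridge_point e b) = of_int (if e then 8 * b - 3 else 8 * b + 11)"
    "snd (bridge_point e b) = of_int (if e then 8 * b + 11 else 8 * b - 3)" for e b
    unfolding bridge_point_def by auto
  show ?thesis
    using assms unfolding apart_def agree_def int of_int_less_iff of_int_eq_iff
    by (cases e; cases e') (simp_all; presburger)+
qed

lemma corner_point_block:
  assumes "0 \<le> c" "c \<le> K" "R \<ge> 8 * of_int K + 2"
  shows "apart (-10, R) (block_point c a b) \<and> \<not> agree (-10, R) (block_point c a b)"
proof -
  have A: "\<bar>arctan a\<bar> < 2" "\<bar>arctan b\<bar> < 2" using abs_arctan_less_2 by auto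
  have "(0::real) \<le> of_int c" "(of_int c::real) \<le> of_int K" using assms by auto
  then have "fst (-10, R) < fst (block_point c a b)" "snd (block_point c a b) < snd (-10, R)"
    unfolding block_point_simps using A assms(3) by auto
  then show ?thesis unfolding apart_def agree_def by auto
qed

text \<open>Cells (i,j) with i, j \<le> N = card W get distinct block numbers in [0, 2 * cell_offset N):
  cells not on an anti-diagonal cut are ordered by (i - j, i), those on an anti-diagonal
  cut by (i + j, i) after the offset.  Thus the two cells touching a cut at a witness
  receive consecutive numbers.\<close>
definition cell_offset :: "nat \<Rightarrow> int" where
  "cell_offset N = (2 * int N + 1) * (int N + 3) + 4"

definition cell_index :: "point set \<Rightarrow> nat \<Rightarrow> nat \<Rightarrow> int" where
  "cell_index W i j =
     (if anti_cut W i j then cell_offset (card W) + (int i + int j) * (int (card W) + 3) + int i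
      else (int i - int j + int (card W)) * (int (card W) + 3) + int i)"

lemma mixed_radix_unique:
  fixes a a' r r' M :: int
  assumes "a * M + r = a' * M + r'" "0 \<le> r" "r < M" "0 \<le> r'" "r' < M"
  shows "a = a' \<and> r = r'"
proof -
  have "(a * M + r) mod M = r" "(a' * M + r') mod M = r'" using assms(2-5) by simp_all
  then have r: "r = r'" using assms(1) by simp
  then have "a * M = a' * M" using assms(1) by simp
  then show ?thesis using r assms(2,3) by simp
qed

lemma cell_index_bounds:
  assumes "i \<le> card W" "j \<le> card W"
  shows "0 \<le> cell_index W i j" "cell_index W i j + 2 \<le> 2 * cell_offset (card W)"
    "\<not> anti_cut W i j \<Longrightarrow> cell_index W i j < cell_offset (card W)"
    "anti_cut W i j \<Longrightarrow> cell_offset (card W) \<le> cell_index W i j"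
proof -
  let ?N = "int (card W)" let ?M = "?N + 3"
  have d: "0 \<le> int i - int j + ?N" "int i - int j + ?N \<le> 2 * ?N" using assms by auto
  have s: "0 \<le> int i + int j" "int i + int j \<le> 2 * ?N" using assms by auto
  have md: "0 \<le> (int i - int j + ?N) * ?M" "(int i - int j + ?N) * ?M \<le> (2 * ?N) * ?M"
    using d by (auto intro: mult_right_mono)
  have ms: "0 \<le> (int i + int j) * ?M" "(int i + int j) * ?M \<le> (2 * ?N) * ?M"
    using s by (auto intro: mult_right_mono)
  have off: "cell_offset (card W) = (2 * ?N) * ?M + ?M + 4" unfolding cell_offset_def by (simp add: algebra_simps)
  have i: "0 \<le> int i" "int i \<le> ?N" "0 \<le> 2 * ?N * ?M" using assms by auto
  have anti: "anti_cut W i j \<Longrightarrow> cell_index W i j = cell_offset (card W) + (int i + int j) * ?M + int i"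
    and diag: "\<not> anti_cut W i j \<Longrightarrow> cell_index W i j = (int i - int j + ?N) * ?M + int i"
    unfolding cell_index_def by auto
  show "0 \<le> cell_index W i j" "cell_index W i j + 2 \<le> 2 * cell_offset (card W)"
    using anti diag md ms off i by (cases "anti_cut W i j"; linarith)+
  show "\<not> anti_cut W i j \<Longrightarrow> cell_index W i j < cell_offset (card W)"
    using diag md off i by linarith
  show "anti_cut W i j \<Longrightarrow> cell_offset (card W) \<le> cell_index W i j"
    using anti ms i by linarith
qed

lemma cell_index_inj:
  assumes "i \<le> card W" "j \<le> card W" "i' \<le> card W" "j' \<le> card W"
    and eq: "cell_index W i j = cell_index W i' j'"
  shows "i = i' \<and> j = j'"
proof -
  let ?M = "int (card W) + 3"
  have r: "0 \<le> int i" "int i < ?M" "0 \<le> int i'" "int i' < ?M" using assms by auto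
  show ?thesis
  proof (cases "anti_cut W i j"; cases "anti_cut W i' j'")
    assume "anti_cut W i j" "anti_cut W i' j'"
    then have "(int i + int j) * ?M + int i = (int i' + int j') * ?M + int i'"
      using eq unfolding cell_index_def by simp
    from mixed_radix_unique[OF this r] show ?thesis by simp
  next
    assume "\<not> anti_cut W i j" "\<not> anti_cut W i' j'"
    then have "(int i - int j + int (card W)) * ?M + int i = (int i' - int j' + int (card W)) * ?M + int i'"
      using eq unfolding cell_index_def by simp
    from mixed_radix_unique[OF this r] show ?thesis by simp
  qed (use cell_index_bounds[OF assms(1,2)] cell_index_bounds[OF assms(3,4)] eq in auto)
qed

lemma cell_index_diag_step:
  "\<not> anti_cut W i j \<Longrightarrow> \<not> anti_cut W (Suc i) (Suc j) \<Longrightarrow> cell_index W (Suc i) (Suc j) = cell_index W i j + 1"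
  unfolding cell_index_def by simp

lemma cell_index_anti_step:
  "anti_cut W i (Suc j) \<Longrightarrow> anti_cut W (Suc i) j \<Longrightarrow> cell_index W (Suc i) j = cell_index W i (Suc j) + 1"
  unfolding cell_index_def by (simp add: algebra_simps)

section \<open>The dominance layout of a square graph\<close>

text \<open>A witness sits at a cut if a diagonal cut passes through its lower left corner or an
  anti-diagonal cut through its upper left corner; its cut index is the number of the
  first of the two cells touching it.\<close>
definition at_cut :: "point set \<Rightarrow> point \<Rightarrow> bool" where
  "at_cut W s \<longleftrightarrow> diag_cut W (xrank W s) (yrank W s) \<or> anti_cut W (xrank W s) (Suc (yrank W s))"

definition cut_index :: "point set \<Rightarrow> point \<Rightarrow> int" where
  "cut_index W s =
     (if diag_cut W (xrank W s) (yrank W s) then cell_index W (xrank W s) (yrank W s)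
      else cell_index W (xrank W s) (Suc (yrank W s)))"

text \<open>Without witnesses every pair is non-adjacent and
  P becomes a decreasing chain.  A point outside W goes into the block of its cell, with local
  coordinates reversing (diagonal cut), keeping (anti-diagonal cut) or ignoring (no cut) the
  order type of the pair.  A witness at a cut becomes a bridge on the side given by the
  parity of its x-rank, a lone witness an isolated corner point, and every other witness a
  private block after all cells.\<close>
definition layout :: "point set \<Rightarrow> point \<Rightarrow> point" where
  "layout W p =
    (if W = {} then (fst p, - fst p)
     else if p \<in> W then
       (if W = {p} then (-10, 16 * of_int (cell_offset (card W)) + 100)
        else if at_cut W p then bridge_point (even (xrank W p)) (cut_index W p)
        else block_point (2 * cell_offset (card W) + int (xrank W p)) 0 0)
     else if diag_cut W (xrank W p) (yrank W p)
       then block_point (cell_index W (xrank W p) (yrank W p)) (fst p) (- snd p)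
     else if anti_cut W (xrank W p) (yrank W p)
       then block_point (cell_index W (xrank W p) (yrank W p)) (fst p) (snd p)
     else block_point (cell_index W (xrank W p) (yrank W p)) (fst p) (fst p))"

definition faithful :: "point set \<Rightarrow> point \<Rightarrow> point \<Rightarrow> bool" where
  "faithful W u v \<longleftrightarrow> apart (layout W u) (layout W v) \<and> (sg_adj W u v \<longleftrightarrow> agree (layout W u) (layout W v))"

lemma faithful_sym: "faithful W u v \<Longrightarrow> faithful W v u"
  unfolding faithful_def using apart_sym agree_sym sg_adj_sym by metis

context sg_setting
begin

lemma rank_bounds:
  assumes "s \<in> W"
  shows "xrank W s \<le> card W" "yrank W s \<le> card W" "Suc (xrank W s) \<le> card W" "Suc (yrank W s) \<le> card W"
  using rank_less_card[OF finite_W assms, of fst] rank_less_card[OF finite_W assms, of snd] by auto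

lemma layout_witness:
  "p \<in> W \<Longrightarrow> W \<noteq> {p} \<Longrightarrow> layout W p =
    (if at_cut W p then bridge_point (even (xrank W p)) (cut_index W p)
     else block_point (2 * cell_offset (card W) + int (xrank W p)) 0 0)"
  unfolding layout_def by auto

lemma layout_point:
  "p \<notin> W \<Longrightarrow> W \<noteq> {} \<Longrightarrow> \<exists>a b. layout W p = block_point (cell_index W (xrank W p) (yrank W p)) a b"
  unfolding layout_def by auto

lemma cut_index_bounds:
  assumes "s \<in> W"
  shows "0 \<le> cut_index W s" "cut_index W s + 2 \<le> 2 * cell_offset (card W)"
  unfolding cut_index_def
  using cell_index_bounds(1,2)[OF rank_bounds(1,2)[OF assms]]
    cell_index_bounds(1,2)[OF rank_bounds(1,4)[OF assms]] by auto

lemma cut_index_cell: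
  assumes "s \<in> W"
  shows "\<exists>j \<le> card W. cut_index W s = cell_index W (xrank W s) j"
proof (cases "diag_cut W (xrank W s) (yrank W s)")
  case True
  then show ?thesis unfolding cut_index_def using rank_bounds(2)[OF assms] by simp blast
next
  case False
  then show ?thesis unfolding cut_index_def using rank_bounds(4)[OF assms] by simp blast
qed

lemma cut_index_distinct:
  assumes "s \<in> W" "t \<in> W" "s \<noteq> t"
  shows "cut_index W s \<noteq> cut_index W t"
proof
  assume e: "cut_index W s = cut_index W t"
  obtain js jt where "js \<le> card W" "jt \<le> card W"
    "cut_index W s = cell_index W (xrank W s) js" "cut_index W t = cell_index W (xrank W t) jt"
    using cut_index_cell[OF assms(1)] cut_index_cell[OF assms(2)] by blast
  then have "xrank W s = xrank W t"
    using cell_index_inj rank_bounds(1)[OF assms(1)] rank_bounds(1)[OF assms(2)] e by metis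
  then show False using rank_distinct[OF assms] by simp
qed

text \<open>Consecutive witnesses are both at cuts, with consecutive cut indices and opposite
  parities; so their bridges are incomparable.\<close>
lemma consecutive_cut_index:
  assumes s: "s \<in> W" and t: "t \<in> W" and c: "consecutive W s t"
  shows "at_cut W s \<and> at_cut W t \<and> cut_index W t = cut_index W s + 1 \<and>
    (even (xrank W t) \<longleftrightarrow> \<not> even (xrank W s))"
proof -
  have st: "s \<noteq> t" using c unfolding consecutive_def by auto
  have Ws: "W \<noteq> {s}" "W \<noteq> {t}" "W \<noteq> {}" using s t st by auto
  from c show ?thesis unfolding consecutive_def
  proof
    assume d: "xrank W t = Suc (xrank W s) \<and> yrank W t = Suc (yrank W s) \<and> diag_cut W (xrank W s) (yrank W s)"
    have dt: "diag_cut W (xrank W t) (yrank W t)" using d diag_cut_step[OF s] by simp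
    have "\<not> anti_cut W (xrank W s) (yrank W s)" "\<not> anti_cut W (xrank W t) (yrank W t)"
      using diag_anti_cut_exclusive[OF Ws(3)] d dt by blast+
    then have "cell_index W (xrank W t) (yrank W t) = cell_index W (xrank W s) (yrank W s) + 1"
      using cell_index_diag_step d by simp
    then show ?thesis unfolding at_cut_def cut_index_def using d dt by simp
  next
    assume d: "xrank W t = Suc (xrank W s) \<and> yrank W s = Suc (yrank W t) \<and>
      anti_cut W (xrank W s) (Suc (yrank W s))"
    have e: "xrank W t = Suc (xrank W s)" "Suc (yrank W t) = yrank W s" using d by auto
    have as: "anti_cut W (Suc (xrank W s)) (yrank W s)" using d anti_cut_step[OF s] by blast
    then have at: "anti_cut W (xrank W t) (Suc (yrank W t))" by (simp only: e)
    have "\<not> diag_cut W (xrank W s) (yrank W s)" using diag_anti_at_witness[OF s Ws(1)] d by blast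
    moreover have "\<not> diag_cut W (xrank W t) (yrank W t)" using diag_anti_at_witness[OF t Ws(2)] at by blast
    ultimately have idx: "cut_index W s = cell_index W (xrank W s) (Suc (yrank W s))"
      "cut_index W t = cell_index W (xrank W t) (Suc (yrank W t))"
      unfolding cut_index_def by simp_all
    have "cell_index W (Suc (xrank W s)) (yrank W s) = cell_index W (xrank W s) (Suc (yrank W s)) + 1"
      using cell_index_anti_step[of W "xrank W s" "yrank W s"] d as by blast
    then have "cut_index W t = cut_index W s + 1" unfolding idx by (simp only: e)
    moreover have "at_cut W s" "at_cut W t" unfolding at_cut_def using d at by blast+
    ultimately show ?thesis using e(1) by simp
  qed
qed

lemma cut_index_consecutive:
  assumes s: "s \<in> W" and t: "t \<in> W" and st: "s \<noteq> t" and cuts: "at_cut W s" "at_cut W t"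
    and inc: "cut_index W t = cut_index W s + 1"
  shows "consecutive W s t"
proof -
  have W: "W \<noteq> {}" using s by auto
  note a = rank_bounds[OF s] rank_bounds[OF t]
  have rne: "yrank W t \<noteq> yrank W s" using rank_distinct[OF t s] st by auto
  have tcell: "cut_index W t = cell_index W (xrank W t) (yrank W t) \<and> diag_cut W (xrank W t) (yrank W t)
      \<or> cut_index W t = cell_index W (xrank W t) (Suc (yrank W t)) \<and> \<not> diag_cut W (xrank W t) (yrank W t)"
    unfolding cut_index_def by simp
  show ?thesis
  proof (cases "diag_cut W (xrank W s) (yrank W s)")
    case True
    have dt: "diag_cut W (Suc (xrank W s)) (Suc (yrank W s))" using True diag_cut_step[OF s] by simp
    have "\<not> anti_cut W (xrank W s) (yrank W s)" "\<not> anti_cut W (Suc (xrank W s)) (Suc (yrank W s))"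
      using diag_anti_cut_exclusive[OF W] True dt by blast+
    then have "cut_index W t = cell_index W (Suc (xrank W s)) (Suc (yrank W s))"
      using cell_index_diag_step True inc unfolding cut_index_def by simp
    then show ?thesis
      using tcell cell_index_inj[OF a(5) a(6) a(3) a(4)] cell_index_inj[OF a(5) a(8) a(3) a(4)] rne True
      unfolding consecutive_def by auto
  next
    case False
    then have as: "anti_cut W (xrank W s) (Suc (yrank W s))" using cuts(1) unfolding at_cut_def by simp
    have "anti_cut W (Suc (xrank W s)) (yrank W s)" using as anti_cut_step[OF s] by simp
    then have "cut_index W t = cell_index W (Suc (xrank W s)) (yrank W s)"
      using cell_index_anti_step[OF as] False inc unfolding cut_index_def by simp
    then show ?thesis
      using tcell cell_index_inj[OF a(5) a(6) a(3) a(2)] cell_index_inj[OF a(5) a(8) a(3) a(2)] rne as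
      unfolding consecutive_def by auto
  qed
qed

lemma faithful_same_cell:
  assumes u: "u \<in> P" "u \<notin> W" and v: "v \<in> P" "v \<notin> W" and uv: "u \<noteq> v" and W: "W \<noteq> {}"
    and cell: "xrank W u = i" "yrank W u = j" "xrank W v = i" "yrank W v = j"
  shows "faithful W u v"
proof -
  note adj = adj_same_cell[OF u v uv cell]
  have ap: "fst u \<noteq> fst v" "snd u \<noteq> snd v" using apart_PW[of u v] u v uv unfolding apart_def by auto
  show ?thesis
  proof (cases "diag_cut W i j")
    case True
    have e: "layout W u = block_point (cell_index W i j) (fst u) (- snd u)"
      "layout W v = block_point (cell_index W i j) (fst v) (- snd v)"
      unfolding layout_def using W u(2) v(2) True cell by auto
    have "sg_adj W u v \<longleftrightarrow> \<not> agree u v" using adj True W unfolding diag_cut_def by auto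
    moreover have "\<not> agree u v \<longleftrightarrow> (fst u < fst v \<longleftrightarrow> - snd u < - snd v)"
      unfolding agree_def using ap by auto
    ultimately show ?thesis unfolding faithful_def e block_points_same_block using ap by auto
  next
    case nD: False
    show ?thesis
    proof (cases "anti_cut W i j")
      case True
      have e: "layout W u = block_point (cell_index W i j) (fst u) (snd u)"
        "layout W v = block_point (cell_index W i j) (fst v) (snd v)"
        unfolding layout_def using W u(2) v(2) True nD cell by auto
      have "sg_adj W u v \<longleftrightarrow> agree u v" using adj True W unfolding anti_cut_def by auto
      then show ?thesis unfolding faithful_def e block_points_same_block using ap by (simp add: agree_def)
    next
      case nA: False
      have e: "layout W u = block_point (cell_index W i j) (fst u) (fst u)"
        "layout W v = block_point (cell_index W i j) (fst v) (fst v)"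
        unfolding layout_def using W u(2) v(2) nA nD cell by auto
      have "sg_adj W u v" using adj nD nA unfolding diag_cut_def anti_cut_def by (cases "agree u v") blast+
      then show ?thesis unfolding faithful_def e block_points_same_block using ap by auto
    qed
  qed
qed

lemma faithful_points:
  assumes u: "u \<in> P" "u \<notin> W" and v: "v \<in> P" "v \<notin> W" and uv: "u \<noteq> v" and W: "W \<noteq> {}"
  shows "faithful W u v"
proof (cases "xrank W u = xrank W v \<and> yrank W u = yrank W v")
  case False
  obtain a b a' b' where
    e: "layout W u = block_point (cell_index W (xrank W u) (yrank W u)) a b"
       "layout W v = block_point (cell_index W (xrank W v) (yrank W v)) a' b'"
    using layout_point[OF u(2) W] layout_point[OF v(2) W] by metis
  have "cell_index W (xrank W u) (yrank W u) \<noteq> cell_index W (xrank W v) (yrank W v)"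
    using cell_index_inj rank_le_card[OF finite_W] False by blast
  then show ?thesis
    unfolding faithful_def e using block_points_different_blocks adj_different_cells[OF u v uv] False by blast
next
  case True
  then show ?thesis using faithful_same_cell[OF u v uv W] by simp
qed

lemma faithful_bridge_point:
  assumes v: "v \<notin> W" and W: "W \<noteq> {}"
    and e: "layout W s = bridge_point p (cell_index W i j)"
    and step: "cell_index W i' j' = cell_index W i j + 1"
    and bounds: "i \<le> card W" "j \<le> card W" "i' \<le> card W" "j' \<le> card W"
    and adj: "sg_adj W s v \<longleftrightarrow> \<not> ((xrank W v = i \<and> yrank W v = j) \<or> (xrank W v = i' \<and> yrank W v = j'))"
  shows "faithful W s v"
proof -
  obtain a b where ev: "layout W v = block_point (cell_index W (xrank W v) (yrank W v)) a b"
    using layout_point[OF v W] by blast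
  have vb: "xrank W v \<le> card W" "yrank W v \<le> card W"
    using rank_le_card[OF finite_W, of fst v] rank_le_card[OF finite_W, of snd v] by auto
  have "(cell_index W (xrank W v) (yrank W v) = cell_index W i j \<or>
         cell_index W (xrank W v) (yrank W v) = cell_index W i j + 1)
     \<longleftrightarrow> (xrank W v = i \<and> yrank W v = j) \<or> (xrank W v = i' \<and> yrank W v = j')"
    unfolding step[symmetric] using cell_index_inj[OF vb bounds(1,2)] cell_index_inj[OF vb bounds(3,4)] by auto
  then have "faithful W v s"
    unfolding faithful_def ev e using block_bridge adj sg_adj_sym by metis
  then show ?thesis using faithful_sym by blast
qed

text \<open>A lone witness is isolated, and its corner point is incomparable with all blocks.\<close>
lemma faithful_lone_witness:
  assumes s: "W = {s}" and v: "v \<in> P" "v \<notin> W"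
  shows "faithful W s v"
proof -
  have W: "W \<noteq> {}" using s by auto
  obtain a b where ev: "layout W v = block_point (cell_index W (xrank W v) (yrank W v)) a b"
    using layout_point[OF v(2) W] by blast
  have vb: "xrank W v \<le> card W" "yrank W v \<le> card W"
    using rank_le_card[OF finite_W, of fst v] rank_le_card[OF finite_W, of snd v] by auto
  have es: "layout W s = (-10, 16 * of_int (cell_offset (card W)) + 100)" unfolding layout_def using s by simp
  have "apart (layout W s) (layout W v) \<and> \<not> agree (layout W s) (layout W v)"
    unfolding es ev using corner_point_block[OF cell_index_bounds(1)[OF vb], of "2 * cell_offset (card W)"]
      cell_index_bounds(2)[OF vb] by simp
  moreover have "\<not> sg_adj W s v"
    using sg_adj_iff_witness[of W s v] not_witnesses_endpoint(1) s by auto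
  ultimately show ?thesis unfolding faithful_def by blast
qed

lemma faithful_witness_point:
  assumes s: "s \<in> W" "s \<in> P" and v: "v \<in> P" "v \<notin> W"
  shows "faithful W s v"
proof (cases "W = {s}")
  case True
  then show ?thesis using faithful_lone_witness v by blast
next
  case lone: False
  have W: "W \<noteq> {}" using s by auto
  note adj = adj_witness_point[OF s v refl refl refl refl]
  note sb = rank_bounds[OF s(1)]
  show ?thesis
  proof (cases "diag_cut W (xrank W s) (yrank W s)")
    case True
    have "diag_cut W (Suc (xrank W s)) (Suc (yrank W s))" using True diag_cut_step[OF s(1)] by simp
    then have "\<not> anti_cut W (xrank W s) (yrank W s)" "\<not> anti_cut W (Suc (xrank W s)) (Suc (yrank W s))"
      using diag_anti_cut_exclusive[OF W] True by blast+
    moreover have "\<not> anti_cut W (xrank W s) (Suc (yrank W s))"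
      using diag_anti_at_witness[OF s(1) lone] True by blast
    moreover have "layout W s = bridge_point (even (xrank W s)) (cell_index W (xrank W s) (yrank W s))"
      using layout_witness[OF s(1) lone] True unfolding at_cut_def cut_index_def by simp
    ultimately show ?thesis
      using faithful_bridge_point[OF v(2) W _ cell_index_diag_step sb(1,2,3,4)] adj True by auto
  next
    case nD: False
    show ?thesis
    proof (cases "anti_cut W (xrank W s) (Suc (yrank W s))")
      case True
      have "anti_cut W (Suc (xrank W s)) (yrank W s)" using True anti_cut_step[OF s(1)] by simp
      moreover have "layout W s = bridge_point (even (xrank W s)) (cell_index W (xrank W s) (Suc (yrank W s)))"
        using layout_witness[OF s(1) lone] True nD unfolding at_cut_def cut_index_def by simp
      ultimately show ?thesis
        using faithful_bridge_point[OF v(2) W _ cell_index_anti_step[OF True] sb(1,4,3,2)] adj True nD by auto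
    next
      case nA: False
      obtain a b where ev: "layout W v = block_point (cell_index W (xrank W v) (yrank W v)) a b"
        using layout_point[OF v(2) W] by blast
      have es: "layout W s = block_point (2 * cell_offset (card W) + int (xrank W s)) 0 0"
        using layout_witness[OF s(1) lone] nA nD unfolding at_cut_def by simp
      have "xrank W v \<le> card W" "yrank W v \<le> card W"
        using rank_le_card[OF finite_W, of fst v] rank_le_card[OF finite_W, of snd v] by auto
      then have "2 * cell_offset (card W) + int (xrank W s) \<noteq> cell_index W (xrank W v) (yrank W v)"
        using cell_index_bounds(2) by fastforce
      then show ?thesis
        unfolding faithful_def es ev using block_points_different_blocks adj nA nD by blast
    qed
  qed
qed

lemma faithful_bridges:
  assumes s: "s \<in> W" "s \<in> P" and t: "t \<in> W" "t \<in> P" and st: "s \<noteq> t"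
    and cuts: "at_cut W s" "at_cut W t"
  shows "faithful W s t"
proof -
  have e: "layout W s = bridge_point (even (xrank W s)) (cut_index W s)"
    "layout W t = bridge_point (even (xrank W t)) (cut_index W t)"
    using layout_witness[OF s(1)] layout_witness[OF t(1)] cuts st s t by auto
  have ne: "cut_index W s \<noteq> cut_index W t" using cut_index_distinct[OF s(1) t(1) st] .
  have br: "apart (layout W s) (layout W t) \<and> (agree (layout W s) (layout W t) \<longleftrightarrow>
       (even (xrank W s) \<longleftrightarrow> even (xrank W t)) \<or> cut_index W t \<ge> cut_index W s + 2 \<or>
       cut_index W s \<ge> cut_index W t + 2)"
    using bridges ne unfolding e by auto
  have "consecutive W s t \<or> consecutive W t s \<longleftrightarrow> \<not> agree (layout W s) (layout W t)"
  proof
    assume "consecutive W s t \<or> consecutive W t s"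
    then show "\<not> agree (layout W s) (layout W t)"
      using consecutive_cut_index[OF s(1) t(1)] consecutive_cut_index[OF t(1) s(1)] br by auto
  next
    assume "\<not> agree (layout W s) (layout W t)"
    then have "even (xrank W s) \<longleftrightarrow> \<not> even (xrank W t)"
      "cut_index W t = cut_index W s + 1 \<or> cut_index W s = cut_index W t + 1"
      using br ne by auto
    then show "consecutive W s t \<or> consecutive W t s"
      using cut_index_consecutive[OF s(1) t(1) st cuts] cut_index_consecutive[OF t(1) s(1) _ cuts(2,1)] st
      by auto
  qed
  then show ?thesis unfolding faithful_def using br adj_witnesses[OF s t st] by blast
qed

lemma private_block_comparable:
  assumes s: "s \<in> W" and t: "t \<in> W" and st: "s \<noteq> t" and nc: "\<not> at_cut W s"
  shows "apart (layout W s) (layout W t) \<and> agree (layout W s) (layout W t)"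
proof -
  have lone: "W \<noteq> {s}" "W \<noteq> {t}" using s t st by auto
  have es: "layout W s = block_point (2 * cell_offset (card W) + int (xrank W s)) 0 0"
    using layout_witness[OF s lone(1)] nc by simp
  show ?thesis
  proof (cases "at_cut W t")
    case True
    have et: "layout W t = bridge_point (even (xrank W t)) (cut_index W t)"
      using layout_witness[OF t lone(2)] True by simp
    have "2 * cell_offset (card W) + int (xrank W s) \<noteq> cut_index W t"
      "2 * cell_offset (card W) + int (xrank W s) \<noteq> cut_index W t + 1"
      using cut_index_bounds[OF t] by auto
    then show ?thesis unfolding es et using block_bridge by blast
  next
    case False
    have et: "layout W t = block_point (2 * cell_offset (card W) + int (xrank W t)) 0 0"
      using layout_witness[OF t lone(2)] False by simp
    have "xrank W s \<noteq> xrank W t" using rank_distinct[OF s t st] by simp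
    then show ?thesis unfolding es et using block_points_different_blocks by simp
  qed
qed

lemma faithful_witnesses:
  assumes s: "s \<in> W" "s \<in> P" and t: "t \<in> W" "t \<in> P" and st: "s \<noteq> t"
  shows "faithful W s t"
proof (cases "at_cut W s \<and> at_cut W t")
  case True
  then show ?thesis using faithful_bridges[OF s t st] by blast
next
  case False
  have "sg_adj W s t"
    using adj_witnesses[OF s t st] consecutive_cut_index[OF s(1) t(1)] consecutive_cut_index[OF t(1) s(1)]
      False by blast
  moreover have "apart (layout W s) (layout W t) \<and> agree (layout W s) (layout W t)"
    using private_block_comparable[OF s(1) t(1) st] private_block_comparable[OF t(1) s(1)] st False
      apart_sym agree_sym by metis
  ultimately show ?thesis unfolding faithful_def by blast
qed

lemma faithful_all:
  assumes u: "u \<in> P" and v: "v \<in> P" and uv: "u \<noteq> v"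
  shows "faithful W u v"
proof (cases "W = {}")
  case True
  have "fst u \<noteq> fst v" using apart_PW[of u v] u v uv unfolding apart_def by auto
  moreover have "\<not> sg_adj W u v" unfolding sg_adj_iff_witness using True by simp
  moreover have "layout W u = (fst u, - fst u)" "layout W v = (fst v, - fst v)" unfolding layout_def using True by auto
  ultimately show ?thesis unfolding faithful_def apart_def agree_def by auto
next
  case W: False
  show ?thesis
  proof (cases "u \<in> W"; cases "v \<in> W")
    assume "u \<in> W" "v \<in> W" then show ?thesis using faithful_witnesses u v uv by blast
  next
    assume "u \<in> W" "v \<notin> W" then show ?thesis using faithful_witness_point u v by blast
  next
    assume "u \<notin> W" "v \<in> W" then show ?thesis using faithful_witness_point u v faithful_sym by blast
  next
    assume "u \<notin> W" "v \<notin> W" then show ?thesis using faithful_points u v uv W by blast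
  qed
qed

end

theorem sg_permutation_graph:
  assumes "finite P" "finite W" "general_pos (P \<union> W)"
  shows "permutation_graph P (sg_adj W)"
proof -
  interpret sg_setting P W using assms(2,3) by unfold_locales
  have apart: "apart (layout W u) (layout W v)" if "u \<in> P" "v \<in> P" "u \<noteq> v" for u v
    using faithful_all[OF that] unfolding faithful_def by blast
  have "inj_on (layout W) P"
  proof (rule inj_onI)
    fix u v assume "u \<in> P" "v \<in> P" "layout W u = layout W v"
    then show "u = v" using apart[of u v] unfolding apart_def by auto
  qed
  then have bij: "bij_betw (layout W) P (layout W ` P)" unfolding bij_betw_def by blast
  have gp: "general_pos (layout W ` P)"
    unfolding general_pos_def
  proof (intro ballI impI)
    fix p q assume "p \<in> layout W ` P" "q \<in> layout W ` P" "p \<noteq> q"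
    then obtain u v where "u \<in> P" "v \<in> P" "u \<noteq> v" "p = layout W u" "q = layout W v" by blast
    then show "fst p \<noteq> fst q \<and> snd p \<noteq> snd q" using apart[of u v] unfolding apart_def by simp
  qed
  have "sg_adj W u v \<longleftrightarrow> dominates (layout W u) (layout W v) \<or> dominates (layout W v) (layout W u)"
    if "u \<in> P" "v \<in> P" "u \<noteq> v" for u v
    using faithful_all[OF that] dominates_iff_agree[OF apart[OF that]] unfolding faithful_def by simp
  then show ?thesis
    unfolding permutation_graph_def using assms(1) bij gp
    by (intro exI[of _ "layout W ` P"] exI[of _ "layout W"]) simp
qed

lemma permutation_graph_iso:
  assumes iso: "graph_iso V E V' E'" and perm: "permutation_graph V' E'"
  shows "permutation_graph V E"
proof -
  obtain h where h: "bij_betw h V V'" and hE: "\<forall>u\<in>V. \<forall>v\<in>V. E u v \<longleftrightarrow> E' (h u) (h v)"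
    using iso unfolding graph_iso_def by blast
  obtain S :: "point set" and f where S: "finite S" "general_pos S" "bij_betw f V' S"
    and fE: "\<forall>u\<in>V'. \<forall>v\<in>V'. u \<noteq> v \<longrightarrow> (E' u v \<longleftrightarrow> dominates (f u) (f v) \<or> dominates (f v) (f u))"
    using perm unfolding permutation_graph_def by blast
  have "E u v \<longleftrightarrow> dominates (f (h u)) (f (h v)) \<or> dominates (f (h v)) (f (h u))"
    if "u \<in> V" "v \<in> V" "u \<noteq> v" for u v
  proof -
    have "h u \<in> V'" "h v \<in> V'" "h u \<noteq> h v"
      using h that unfolding bij_betw_def inj_on_def by auto
    then show ?thesis using hE fE that by blast
  qed
  then show ?thesis
    unfolding permutation_graph_def using S(1,2) bij_betw_trans[OF h S(3)] by (intro exI[of _ S]) auto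
qed

lemma permutation_graph_one_witness:
  assumes perm: "permutation_graph V E" and irrefl: "\<And>u. \<not> E u u"
  shows "\<exists>S w. finite S \<and> general_pos (S \<union> {w}) \<and> graph_iso V E S (sg_adj {w})"
proof -
  obtain S :: "point set" and f where S: "finite S" "general_pos S" "bij_betw f V S"
    and fE: "\<forall>u\<in>V. \<forall>v\<in>V. u \<noteq> v \<longrightarrow> (E u v \<longleftrightarrow> dominates (f u) (f v) \<or> dominates (f v) (f u))"
    using perm unfolding permutation_graph_def by blast
  obtain w where w: "general_pos (S \<union> {w})"
    and ws: "\<forall>u\<in>S. \<forall>v\<in>S. u \<noteq> v \<longrightarrow> (sg_adj {w} u v \<longleftrightarrow> dominates u v \<or> dominates v u)"
    using far_witness_realises_dominance[OF S(1,2)] by blast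
  have "E u v \<longleftrightarrow> sg_adj {w} (f u) (f v)" if "u \<in> V" "v \<in> V" for u v
  proof (cases "u = v")
    case True
    then show ?thesis using irrefl sg_adj_irrefl by simp
  next
    case False
    then have "f u \<in> S" "f v \<in> S" "f u \<noteq> f v"
      using S(3) that unfolding bij_betw_def inj_on_def by auto
    then show ?thesis using fE ws that False by blast
  qed
  then show ?thesis unfolding graph_iso_def using S(1,3) w by blast
qed

theorem mainTheorem10:
  "(\<forall>(V :: 'a set) E. finite_simple_graph V E \<longrightarrow>
      ((\<exists>P W :: point set. finite P \<and> finite W \<and> general_pos (P \<union> W) \<and>
          graph_iso V E P (sg_adj W))
       \<longleftrightarrow> permutation_graph V E))
   \<and>
   (\<forall>P W :: point set. finite P \<and> finite W \<and> general_pos (P \<union> W) \<longrightarrow>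
      (\<exists>P' W' :: point set. finite P' \<and> finite W' \<and> general_pos (P' \<union> W') \<and> card W' \<le> 1 \<and>
          graph_iso P (sg_adj W) P' (sg_adj W')))"
proof (intro conjI allI impI iffI)
  fix V :: "'a set" and E
  assume "finite_simple_graph V E"
  then have irrefl: "\<And>u. \<not> E u u" unfolding finite_simple_graph_def by blast
  show "permutation_graph V E"
    if "\<exists>P W. finite P \<and> finite W \<and> general_pos (P \<union> W) \<and> graph_iso V E P (sg_adj W)"
    using that sg_permutation_graph permutation_graph_iso by blast
  show "\<exists>P W. finite P \<and> finite W \<and> general_pos (P \<union> W) \<and> graph_iso V E P (sg_adj W)"
    if "permutation_graph V E"
    using permutation_graph_one_witness[OF that irrefl] by blast
next
  fix P W :: "point set"
  assume "finite P \<and> finite W \<and> general_pos (P \<union> W)"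
  then have "permutation_graph P (sg_adj W)" using sg_permutation_graph by blast
  then obtain S w where "finite S" "general_pos (S \<union> {w})" "graph_iso P (sg_adj W) S (sg_adj {w})"
    using permutation_graph_one_witness sg_adj_irrefl by blast
  then show "\<exists>P' W'. finite P' \<and> finite W' \<and> general_pos (P' \<union> W') \<and> card W' \<le> 1 \<and>
      graph_iso P (sg_adj W) P' (sg_adj W')"
    by (intro exI[of _ S] exI[of _ "{w}"]) simp
qed

end
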